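(* Let $\varphi\in\mathcal G(X)$. For every one-dimensional subspace $Y\subset X$ and every $y\in Y\setminus\{0\}$, the limit $$(\tau_Y\varphi)(x):=\lim_{t\to+\infty}\varphi(x+ty)$$ exists for all $x\in X$ and does not depend on the choice of $y$. If $\tau_Y\varphi=0$ for all one-dimensional subspaces $Y$ of $X$, then $\varphi\in C_0(X)$.
   Context: Let $X$ be a finite-dimensional real vector space. For a vector subspace $Y\subset X$ let $\pi_Y:X\to X/Y$ be the quotient map. Identify $C_0(X/Y)$ (continuous functions on $X/Y$ vanishing at infinity) with the set of functions $\phi\circ\pi_Y$ on $X$; for $Y=X$ this gives the constants. The Grassmann algebra $\mathcal G(X)$ is the norm closure (in the sup norm) of $\sum_Y C_0(X/Y)$, the sum running over all vector subspaces $Y$ of $X$. *)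

theory Defs
  imports "HOL-Analysis.Analysis"
begin

text \<open>X is modelled by a type 'a of class euclidean_space (a finite-dimensional
real inner product space; any norm on a finite-dimensional space gives the same
topology). Functions are complex-valued.\<close>

text \<open>C_0(X/Y), identified with functions phi o pi_Y on X: continuous functions on X
that are invariant under translations by Y and vanish at infinity in X/Y, where the
quotient norm of the class of x is infdist x Y.\<close>
definition C0quot :: "'a::euclidean_space set \<Rightarrow> ('a \<Rightarrow> complex) set" where
  "C0quot Y = {f. continuous_on UNIV f \<and> (\<forall>x y. y \<in> Y \<longrightarrow> f (x + y) = f x) \<and>
      (\<forall>e>0. \<exists>R. \<forall>x. R \<le> infdist x Y \<longrightarrow> norm (f x) < e)}"

definition C0 :: "('a::euclidean_space \<Rightarrow> complex) set" where
  "C0 = {f. continuous_on UNIV f \<and> (f \<longlongrightarrow> 0) at_infinity}"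

definition GrassSum :: "('a::euclidean_space \<Rightarrow> complex) set" where
  "GrassSum = {f. \<exists>n::nat. \<exists>Ys g. (\<forall>i<n. subspace (Ys i) \<and> g i \<in> C0quot (Ys i)) \<and>
                   f = (\<lambda>x. \<Sum>i<n. g i x)}"

definition Grassmann :: "('a::euclidean_space \<Rightarrow> complex) set" where
  "Grassmann = {f. \<forall>e>0. \<exists>g\<in>GrassSum. \<forall>x. norm (f x - g x) \<le> e}"

definition tau :: "'a::euclidean_space set \<Rightarrow> ('a \<Rightarrow> complex) \<Rightarrow> 'a \<Rightarrow> complex" where
  "tau Y \<phi> x = Lim at_top (\<lambda>t::real. \<phi> (x + t *\<^sub>R (SOME y. y \<in> Y \<and> y \<noteq> 0)))"

end

theory Submission
  imports Defs
begin

text \<open>Each g in the algebraic sum is a finite sum of functions g_i in C_0(X/Y_i). Along a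
  ray x + t y the summand g_i is constant if y \<in> Y_i and tends to 0 otherwise, because the
  distance from x + t y to Y_i grows linearly in t. Hence g has ray limits that depend only on
  the line spanned by y, and uniform approximation carries this over to the Grassmann algebra.

  If \<phi> did not vanish at infinity, there would be points w_k \<rightarrow> \<infinity> with
  |\<phi>(w_k)| \<ge> \<epsilon> whose directions converge to a unit vector u. Approximate \<phi> by g:
  the summands whose Y_i does not contain u vanish along w_k, since the distance from w_k to
  Y_i grows like |w_k|, while the remaining ones form a u-invariant function, which is the ray
  limit of g in direction u and is therefore within the approximation error of the ray limit
  \<tau>_Y \<phi> = 0 of \<phi>, Y the line through u.\<close>

lemma dist_limits_le:
  assumes "(f \<longlongrightarrow> a) F" "(g \<longlongrightarrow> b) F" "F \<noteq> bot"
    and "\<forall>\<^sub>F x in F. dist (f x) (g x) \<le> e"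
  shows "dist a b \<le> e"
  using tendsto_upperbound[OF tendsto_dist[OF assms(1,2)] assms(4,3)] .

lemma uniform_limit_tendsto_limits:
  fixes f :: "nat \<Rightarrow> 'a \<Rightarrow> 'b::complete_space"
  assumes unif: "uniform_limit UNIV f h sequentially"
    and lim: "\<And>n. (f n \<longlongrightarrow> l n) F" and F: "F \<noteq> bot"
  shows "\<exists>L. l \<longlonglongrightarrow> L \<and> (h \<longlongrightarrow> L) F"
proof -
  have "Cauchy l"
  proof (rule metric_CauchyI)
    fix e :: real assume "0 < e"
    then obtain M where M: "\<forall>x\<in>UNIV. \<forall>m\<ge>M. \<forall>n\<ge>M. dist (f m x) (f n x) < e / 2"
      using uniformly_convergent_Cauchy[OF uniformly_convergentI[OF unif]]
      unfolding uniformly_Cauchy_on_def by (meson half_gt_zero)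
    have "dist (l m) (l n) < e" if "m \<ge> M" "n \<ge> M" for m n
    proof -
      have "dist (l m) (l n) \<le> e / 2"
        using M that by (intro dist_limits_le[OF lim lim F] always_eventually allI less_imp_le) blast
      with \<open>0 < e\<close> show ?thesis
        by linarith
    qed
    then show "\<exists>M. \<forall>m\<ge>M. \<forall>n\<ge>M. dist (l m) (l n) < e"
      by blast
  qed
  then obtain L where L: "l \<longlonglongrightarrow> L"
    using Cauchy_convergent_iff convergent_def by blast
  have "(h \<longlongrightarrow> L) F"
    by (rule swap_uniform_limit'[OF always_eventually[OF allI[OF lim]] L unif]) (simp_all add: F)
  with L show ?thesis
    by blast
qed

lemma uniform_limit_compose_right:
  assumes "uniform_limit UNIV f g F"
  shows "uniform_limit UNIV (\<lambda>n x. f n (k x)) (\<lambda>x. g (k x)) F"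
  unfolding uniform_limit_iff
proof (intro allI impI)
  fix e :: real assume "0 < e"
  then have "\<forall>\<^sub>F n in F. \<forall>y. dist (f n y) (g y) < e"
    using assms unfolding uniform_limit_iff by simp
  then show "\<forall>\<^sub>F n in F. \<forall>x\<in>UNIV. dist (f n (k x)) (g (k x)) < e"
    by (rule eventually_mono) simp
qed

lemma subspace_scaleR_iff:
  assumes "subspace S" "c \<noteq> 0"
  shows "c *\<^sub>R x \<in> S \<longleftrightarrow> x \<in> S"
  using assms subspace_scale[of S "c *\<^sub>R x" "inverse c"] subspace_scale[of S x c] by auto

lemma subspace_dim_1_eq_span:
  fixes Y :: "'a::euclidean_space set"
  assumes "subspace Y" "dim Y = 1" "y \<in> Y" "y \<noteq> 0"
  shows "Y = span {y}"
  using dim_eq_span[of "{y}" Y] assms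
  by (metis dim_singleton empty_subsetI insert_subset order_refl span_eq_iff)

lemma infdist_scaleR_subspace:
  fixes Z :: "'a::euclidean_space set"
  assumes Z: "subspace Z"
  shows "infdist (c *\<^sub>R x) Z = \<bar>c\<bar> * infdist x Z"
proof -
  have ne: "Z \<noteq> {}"
    using Z subspace_0 by blast
  have ge: "\<bar>c\<bar> * infdist x Z \<le> infdist (c *\<^sub>R x) Z" if "c \<noteq> 0" for c x
  proof (unfold infdist_notempty[OF ne], rule cINF_greatest[OF ne])
    fix a assume "a \<in> Z"
    then have "a /\<^sub>R c \<in> Z"
      using Z by (simp add: subspace_scale)
    then have "\<bar>c\<bar> * (INF a\<in>Z. dist x a) \<le> \<bar>c\<bar> * dist x (a /\<^sub>R c)"
      by (intro mult_left_mono cINF_lower) (auto intro: bdd_belowI[of _ 0])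
    also have "\<dots> = dist (c *\<^sub>R x) a"
      using \<open>c \<noteq> 0\<close> by (simp add: dist_norm scaleR_diff_right flip: norm_scaleR)
    finally show "\<bar>c\<bar> * (INF a\<in>Z. dist x a) \<le> dist (c *\<^sub>R x) a" .
  qed
  show ?thesis
  proof (cases "c = 0")
    case True
    then show ?thesis
      using Z by (simp add: subspace_0)
  next
    case False
    have "\<bar>inverse c\<bar> * infdist (c *\<^sub>R x) Z \<le> infdist x Z"
      using ge[of "inverse c" "c *\<^sub>R x"] False by simp
    then show ?thesis
      using ge[OF False, of x] False by (simp add: field_simps)
  qed
qed

lemma infdist_pos_not_in_subspace:
  fixes Z :: "'a::euclidean_space set"
  assumes "subspace Z" "u \<notin> Z"
  shows "0 < infdist u Z"
  using assms closed_subspace infdist_pos_not_in_closed subspace_0 by blast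

lemma filterlim_infdist_ray:
  fixes Z :: "'a::euclidean_space set"
  assumes Z: "subspace Z" and y: "y \<notin> Z"
  shows "filterlim (\<lambda>t. infdist (x + t *\<^sub>R y) Z) at_top at_top"
proof (rule filterlim_at_top_mono)
  have "filterlim (\<lambda>t. infdist y Z * t) at_top at_top"
    using infdist_pos_not_in_subspace[OF Z y]
    by (auto intro!: filterlim_tendsto_pos_mult_at_top filterlim_ident)
  then show "filterlim (\<lambda>t. infdist y Z * t - norm x) at_top at_top"
    using filterlim_tendsto_add_at_top[OF tendsto_const[of "- norm x"]] by simp
  show "\<forall>\<^sub>F t in at_top. infdist y Z * t - norm x \<le> infdist (x + t *\<^sub>R y) Z"
  proof (rule eventually_mono[OF eventually_ge_at_top[of 0]])
    fix t :: real assume "0 \<le> t"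
    have "infdist (t *\<^sub>R y) Z \<le> infdist (x + t *\<^sub>R y) Z + dist (t *\<^sub>R y) (x + t *\<^sub>R y)"
      by (rule infdist_triangle)
    then show "infdist y Z * t - norm x \<le> infdist (x + t *\<^sub>R y) Z"
      using \<open>0 \<le> t\<close> by (simp add: infdist_scaleR_subspace[OF Z] dist_norm mult.commute)
  qed
qed

lemma filterlim_infdist_direction:
  fixes Z :: "'a::euclidean_space set"
  assumes Z: "subspace Z" and u: "u \<notin> Z"
    and norm_w: "filterlim (\<lambda>k. norm (w k)) at_top F"
    and sgn_w: "((\<lambda>k. sgn (w k)) \<longlongrightarrow> u) F"
  shows "filterlim (\<lambda>k. infdist (w k) Z) at_top F"
proof (rule filterlim_at_top_mono)
  define d where "d = infdist u Z"
  have d: "0 < d"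
    unfolding d_def using infdist_pos_not_in_subspace[OF Z u] .
  show "filterlim (\<lambda>k. d / 2 * norm (w k)) at_top F"
    using d by (intro filterlim_tendsto_pos_mult_at_top[OF tendsto_const _ norm_w]) simp
  have "\<forall>\<^sub>F k in F. dist (sgn (w k)) u < d / 2 \<and> 0 < norm (w k)"
    using tendstoD[OF sgn_w, of "d / 2"] d
      filterlim_at_top_dense[THEN iffD1, OF norm_w, rule_format, of 0]
    by (auto elim: eventually_elim2)
  then show "\<forall>\<^sub>F k in F. d / 2 * norm (w k) \<le> infdist (w k) Z"
  proof (rule eventually_mono, elim conjE)
    fix k assume close: "dist (sgn (w k)) u < d / 2" and pos: "0 < norm (w k)"
    have "d \<le> infdist (sgn (w k)) Z + dist u (sgn (w k))"
      unfolding d_def by (rule infdist_triangle)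
    then have "d / 2 \<le> infdist (sgn (w k)) Z"
      using close by (simp add: dist_commute)
    then have "d / 2 * norm (w k) \<le> norm (w k) * infdist (sgn (w k)) Z"
      using pos by (simp add: mult.commute)
    also have "\<dots> = infdist (norm (w k) *\<^sub>R sgn (w k)) Z"
      by (simp add: infdist_scaleR_subspace[OF Z])
    also have "norm (w k) *\<^sub>R sgn (w k) = w k"
      using pos by (simp add: sgn_div_norm)
    finally show "d / 2 * norm (w k) \<le> infdist (w k) Z" .
  qed
qed

lemma C0quot_tendsto_zero:
  assumes g: "g \<in> C0quot Z" and far: "filterlim (\<lambda>k. infdist (w k) Z) at_top F"
  shows "((\<lambda>k. g (w k)) \<longlongrightarrow> 0) F"
proof (rule tendstoI)
  fix e :: real assume "0 < e"
  then obtain R where R: "\<And>x. R \<le> infdist x Z \<Longrightarrow> norm (g x) < e"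
    using g unfolding C0quot_def by blast
  show "\<forall>\<^sub>F k in F. dist (g (w k)) 0 < e"
    using filterlim_at_top[THEN iffD1, OF far, rule_format, of R]
    by (rule eventually_mono) (simp add: R)
qed

lemma C0quot_tendsto_ray:
  fixes Z :: "'a::euclidean_space set"
  assumes Z: "subspace Z" and g: "g \<in> C0quot Z"
  shows "((\<lambda>t. g (x + t *\<^sub>R y)) \<longlongrightarrow> (if y \<in> Z then g x else 0)) at_top"
proof (cases "y \<in> Z")
  case True
  then have "g (x + t *\<^sub>R y) = g x" for t
    using g Z unfolding C0quot_def by (simp add: subspace_scale)
  then show ?thesis
    using True by simp
next
  case False
  then show ?thesis
    using C0quot_tendsto_zero[OF g filterlim_infdist_ray[OF Z False]] by simp
qed

lemma GrassSumE:
  assumes "g \<in> GrassSum"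
  obtains n :: nat and Ys gs where "\<forall>i<n. subspace (Ys i) \<and> gs i \<in> C0quot (Ys i)"
    and "g = (\<lambda>x. \<Sum>i<n. gs i x)"
  using assms that unfolding GrassSum_def by blast

lemma GrassSum_continuous: "g \<in> GrassSum \<Longrightarrow> continuous_on UNIV g"
  unfolding GrassSum_def C0quot_def by (auto intro!: continuous_on_sum)

lemma GrassSum_tendsto_ray:
  assumes "g \<in> GrassSum" "c \<noteq> 0"
  shows "\<exists>l. ((\<lambda>t. g (x + t *\<^sub>R y)) \<longlongrightarrow> l) at_top
           \<and> ((\<lambda>t. g (x + t *\<^sub>R (c *\<^sub>R y))) \<longlongrightarrow> l) at_top"
proof -
  obtain n :: nat and Ys gs where G: "\<forall>i<n. subspace (Ys i) \<and> gs i \<in> C0quot (Ys i)"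
    and g: "g = (\<lambda>x. \<Sum>i<n. gs i x)"
    using assms(1) by (rule GrassSumE)
  have lim: "((\<lambda>t. g (x + t *\<^sub>R v)) \<longlongrightarrow> (\<Sum>i<n. if v \<in> Ys i then gs i x else 0)) at_top" for v
    unfolding g using G by (intro tendsto_sum C0quot_tendsto_ray) auto
  have "(\<Sum>i<n. if c *\<^sub>R y \<in> Ys i then gs i x else 0) = (\<Sum>i<n. if y \<in> Ys i then gs i x else 0)"
    using G assms(2) by (intro sum.cong) (auto simp: subspace_scaleR_iff)
  then show ?thesis
    using lim[of y] lim[of "c *\<^sub>R y"] by auto
qed

lemma GrassSum_asymptotic_ray:
  fixes w :: "'b \<Rightarrow> 'a::euclidean_space"
  assumes "g \<in> GrassSum"
    and norm_w: "filterlim (\<lambda>k. norm (w k)) at_top F"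
    and sgn_w: "((\<lambda>k. sgn (w k)) \<longlongrightarrow> u) F"
  shows "\<exists>h. (\<forall>z. ((\<lambda>t. g (z + t *\<^sub>R u)) \<longlongrightarrow> h z) at_top)
           \<and> ((\<lambda>k. g (w k) - h (w k)) \<longlongrightarrow> 0) F"
proof -
  obtain n :: nat and Ys gs where G: "\<forall>i<n. subspace (Ys i) \<and> gs i \<in> C0quot (Ys i)"
    and g: "g = (\<lambda>x. \<Sum>i<n. gs i x)"
    using assms(1) by (rule GrassSumE)
  define h where "h z = (\<Sum>i<n. if u \<in> Ys i then gs i z else 0)" for z
  have "((\<lambda>t. g (z + t *\<^sub>R u)) \<longlongrightarrow> h z) at_top" for z
    unfolding g h_def using G by (intro tendsto_sum C0quot_tendsto_ray) auto
  moreover have "((\<lambda>k. \<Sum>i<n. if u \<in> Ys i then 0 else gs i (w k)) \<longlongrightarrow> 0) F"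
  proof (intro tendsto_null_sum)
    fix i assume "i \<in> {..<n}"
    then have "subspace (Ys i)" "gs i \<in> C0quot (Ys i)"
      using G by auto
    then show "((\<lambda>k. if u \<in> Ys i then 0 else gs i (w k)) \<longlongrightarrow> 0) F"
      by (cases "u \<in> Ys i")
        (simp_all add: C0quot_tendsto_zero filterlim_infdist_direction[OF _ _ norm_w sgn_w])
  qed
  moreover have "g z - h z = (\<Sum>i<n. if u \<in> Ys i then 0 else gs i z)" for z
    unfolding g h_def by (simp add: sum_subtractf[symmetric] if_distrib cong: if_cong)
  ultimately show ?thesis
    by (intro exI[of _ h]) simp
qed

lemma Grassmann_uniform_limit:
  assumes "\<phi> \<in> Grassmann"
  obtains G where "\<And>n. G n \<in> GrassSum" "uniform_limit UNIV G \<phi> sequentially"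
proof -
  have "\<forall>n. \<exists>g\<in>GrassSum. \<forall>x. norm (\<phi> x - g x) \<le> inverse (real (Suc n))"
    using assms unfolding Grassmann_def by simp
  then obtain G where G: "\<And>n. G n \<in> GrassSum"
    and close: "\<And>n x. norm (\<phi> x - G n x) \<le> inverse (real (Suc n))"
    by metis
  have unif: "uniform_limit UNIV G \<phi> sequentially"
    unfolding uniform_limit_iff
  proof (intro allI impI)
    fix e :: real assume "0 < e"
    then have "\<forall>\<^sub>F n in sequentially. inverse (real (Suc n)) < e"
      using order_tendstoD(2)[OF LIMSEQ_inverse_real_of_nat] by blast
    then show "\<forall>\<^sub>F n in sequentially. \<forall>x\<in>UNIV. dist (G n x) (\<phi> x) < e"
      by (rule eventually_mono) (metis close dist_norm norm_minus_commute order.strict_trans1)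
  qed
  from G unif show thesis
    by (rule that)
qed

lemma Grassmann_continuous:
  assumes "\<phi> \<in> Grassmann"
  shows "continuous_on UNIV \<phi>"
proof -
  obtain G where "\<And>n. G n \<in> GrassSum" "uniform_limit UNIV G \<phi> sequentially"
    using Grassmann_uniform_limit[OF assms] by metis
  then show ?thesis
    by (intro uniform_limit_theorem[of _ G]) (auto intro!: always_eventually GrassSum_continuous)
qed

lemma Grassmann_tendsto_ray:
  assumes "\<phi> \<in> Grassmann" "c \<noteq> 0"
  shows "\<exists>L. ((\<lambda>t. \<phi> (x + t *\<^sub>R y)) \<longlongrightarrow> L) at_top
           \<and> ((\<lambda>t. \<phi> (x + t *\<^sub>R (c *\<^sub>R y))) \<longlongrightarrow> L) at_top"
proof -
  obtain G where G: "\<And>n. G n \<in> GrassSum" and unif: "uniform_limit UNIV G \<phi> sequentially"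
    using Grassmann_uniform_limit[OF assms(1)] by metis
  have unif_ray: "uniform_limit UNIV (\<lambda>n t. G n (x + t *\<^sub>R v)) (\<lambda>t. \<phi> (x + t *\<^sub>R v)) sequentially"
    for v
    using unif by (rule uniform_limit_compose_right)
  have "\<forall>n. \<exists>l. ((\<lambda>t. G n (x + t *\<^sub>R y)) \<longlongrightarrow> l) at_top
      \<and> ((\<lambda>t. G n (x + t *\<^sub>R (c *\<^sub>R y))) \<longlongrightarrow> l) at_top"
    using GrassSum_tendsto_ray[OF G assms(2)] by blast
  then obtain l where l: "\<And>n. ((\<lambda>t. G n (x + t *\<^sub>R y)) \<longlongrightarrow> l n) at_top"
    "\<And>n. ((\<lambda>t. G n (x + t *\<^sub>R (c *\<^sub>R y))) \<longlongrightarrow> l n) at_top"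
    by metis
  obtain L where L: "l \<longlonglongrightarrow> L" "((\<lambda>t. \<phi> (x + t *\<^sub>R y)) \<longlongrightarrow> L) at_top"
    using uniform_limit_tendsto_limits[OF unif_ray l(1) trivial_limit_at_top_linorder] by blast
  obtain L' where L': "l \<longlonglongrightarrow> L'" "((\<lambda>t. \<phi> (x + t *\<^sub>R (c *\<^sub>R y))) \<longlongrightarrow> L') at_top"
    using uniform_limit_tendsto_limits[OF unif_ray l(2) trivial_limit_at_top_linorder] by blast
  have "L' = L"
    using L'(1) L(1) by (rule LIMSEQ_unique)
  with L L' show ?thesis
    by blast
qed

lemma tau_tendsto:
  assumes "\<phi> \<in> Grassmann" "subspace Y" "dim Y = 1" "y \<in> Y" "y \<noteq> 0"
  shows "((\<lambda>t. \<phi> (x + t *\<^sub>R y)) \<longlongrightarrow> tau Y \<phi> x) at_top"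
proof -
  define y0 where "y0 = (SOME y. y \<in> Y \<and> y \<noteq> 0)"
  have "y0 \<in> Y \<and> y0 \<noteq> 0"
    unfolding y0_def using assms(4,5) by (rule someI[of _ y, OF conjI])
  then obtain c where c: "c \<noteq> 0" "y0 = c *\<^sub>R y"
    using subspace_dim_1_eq_span[OF assms(2-5)] by (auto simp: span_singleton)
  obtain L where "((\<lambda>t. \<phi> (x + t *\<^sub>R y)) \<longlongrightarrow> L) at_top"
    and "((\<lambda>t. \<phi> (x + t *\<^sub>R y0)) \<longlongrightarrow> L) at_top"
    using Grassmann_tendsto_ray[OF assms(1) c(1)] c(2) by blast
  moreover from this(2) have "tau Y \<phi> x = L"
    unfolding tau_def y0_def[symmetric] by (rule tendsto_Lim[OF trivial_limit_at_top_linorder])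
  ultimately show ?thesis
    by simp
qed

lemma Grassmann_tendsto_zero_direction:
  fixes \<phi> :: "'a::euclidean_space \<Rightarrow> complex"
  assumes \<phi>: "\<phi> \<in> Grassmann"
    and ray: "\<And>z. ((\<lambda>t. \<phi> (z + t *\<^sub>R u)) \<longlongrightarrow> 0) at_top"
    and norm_w: "filterlim (\<lambda>k. norm (w k)) at_top F"
    and sgn_w: "((\<lambda>k. sgn (w k)) \<longlongrightarrow> u) F"
  shows "((\<lambda>k. \<phi> (w k)) \<longlongrightarrow> 0) F"
proof (rule tendstoI)
  fix e :: real assume "0 < e"
  then have e3: "0 < e / 3"
    by simp
  then obtain g where g: "g \<in> GrassSum" and g_close: "\<forall>x. norm (\<phi> x - g x) \<le> e / 3"
    using \<phi> unfolding Grassmann_def by blast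
  obtain h where h_ray: "\<And>z. ((\<lambda>t. g (z + t *\<^sub>R u)) \<longlongrightarrow> h z) at_top"
    and h_w: "((\<lambda>k. g (w k) - h (w k)) \<longlongrightarrow> 0) F"
    using GrassSum_asymptotic_ray[OF g norm_w sgn_w] by blast
  have h_small: "norm (h z) \<le> e / 3" for z
  proof -
    have "dist (h z) 0 \<le> e / 3"
      using g_close
      by (intro dist_limits_le[OF h_ray ray[of z] trivial_limit_at_top_linorder] always_eventually allI)
        (simp add: dist_norm norm_minus_commute)
    then show ?thesis
      by simp
  qed
  have "\<forall>\<^sub>F k in F. norm (g (w k) - h (w k)) < e / 3"
    using tendstoD[OF h_w e3] by simp
  then show "\<forall>\<^sub>F k in F. dist (\<phi> (w k)) 0 < e"
  proof (rule eventually_mono)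
    fix k assume k: "norm (g (w k) - h (w k)) < e / 3"
    have "norm (\<phi> (w k)) = norm ((\<phi> (w k) - g (w k)) + (g (w k) - h (w k)) + h (w k))"
      by simp
    also have "\<dots> \<le> norm (\<phi> (w k) - g (w k)) + norm (g (w k) - h (w k)) + norm (h (w k))"
      by (rule order.trans[OF norm_triangle_ineq add_right_mono[OF norm_triangle_ineq]])
    also have "\<dots> < e"
      using g_close[rule_format, of "w k"] k h_small[of "w k"] by linarith
    finally show "dist (\<phi> (w k)) 0 < e"
      by simp
  qed
qed

lemma Grassmann_tendsto_zero_at_infinity:
  fixes \<phi> :: "'a::euclidean_space \<Rightarrow> complex"
  assumes \<phi>: "\<phi> \<in> Grassmann"
    and rays: "\<And>u z. norm u = 1 \<Longrightarrow> ((\<lambda>t. \<phi> (z + t *\<^sub>R u)) \<longlongrightarrow> 0) at_top"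
  shows "(\<phi> \<longlongrightarrow> 0) at_infinity"
proof (rule ccontr)
  assume "\<not> (\<phi> \<longlongrightarrow> 0) at_infinity"
  then obtain e :: real where e: "0 < e" and "\<not> (\<forall>\<^sub>F x in at_infinity. dist (\<phi> x) 0 < e)"
    unfolding tendsto_iff by blast
  then have "\<forall>k. \<exists>x. real (Suc k) \<le> norm x \<and> e \<le> norm (\<phi> x)"
    unfolding eventually_at_infinity by (auto simp: not_less)
  then obtain xs where xs_large: "\<And>k. real (Suc k) \<le> norm (xs k)"
    and xs_bad: "\<And>k. e \<le> norm (\<phi> (xs k))"
    by metis
  have "sgn (xs k) \<in> sphere 0 1" for k
    using xs_large[of k] by (auto simp: norm_sgn)
  then have "\<forall>k. sgn (xs k) \<in> sphere 0 1"
    by blast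
  then obtain u r where u: "u \<in> sphere 0 1" and r: "strict_mono r"
    and sgn_w: "(\<lambda>k. sgn (xs (r k))) \<longlonglongrightarrow> u"
    by (rule seq_compactE[OF compact_imp_seq_compact[OF compact_sphere]]) (auto simp: comp_def)
  have "\<forall>\<^sub>F k in sequentially. real k \<le> norm (xs (r k))"
    using xs_large seq_suble[OF r]
    by (intro always_eventually allI) (meson of_nat_le_iff le_SucI order.trans)
  then have "filterlim (\<lambda>k. norm (xs (r k))) at_top sequentially"
    by (rule filterlim_at_top_mono[OF filterlim_real_sequentially])
  then have "(\<lambda>k. \<phi> (xs (r k))) \<longlonglongrightarrow> 0"
    using u by (intro Grassmann_tendsto_zero_direction[OF \<phi> rays _ sgn_w]) auto
  from tendstoD[OF this e] have "\<forall>\<^sub>F k in sequentially. norm (\<phi> (xs (r k))) < e"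
    by simp
  then obtain k where "norm (\<phi> (xs (r k))) < e"
    using eventually_happens'[OF sequentially_bot] by blast
  with xs_bad[of "r k"] show False
    by linarith
qed

theorem mainTheorem16:
  fixes \<phi> :: "'a::euclidean_space \<Rightarrow> complex"
  assumes "\<phi> \<in> Grassmann"
  shows "(\<forall>Y. subspace Y \<and> dim Y = 1 \<longrightarrow>
            (\<forall>y\<in>Y - {0}. \<forall>x. ((\<lambda>t::real. \<phi> (x + t *\<^sub>R y)) \<longlongrightarrow> tau Y \<phi> x) at_top))
       \<and> ((\<forall>Y. subspace Y \<and> dim Y = 1 \<longrightarrow> tau Y \<phi> = (\<lambda>x. 0)) \<longrightarrow> \<phi> \<in> C0)"
proof (intro conjI allI impI ballI)
  show "((\<lambda>t. \<phi> (x + t *\<^sub>R y)) \<longlongrightarrow> tau Y \<phi> x) at_top"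
    if "subspace Y \<and> dim Y = 1" "y \<in> Y - {0}" for Y y x
    using tau_tendsto[OF assms] that by blast
next
  assume tau_zero: "\<forall>Y. subspace Y \<and> dim Y = 1 \<longrightarrow> tau Y \<phi> = (\<lambda>x. 0)"
  have "((\<lambda>t. \<phi> (z + t *\<^sub>R u)) \<longlongrightarrow> 0) at_top" if "norm u = 1" for u z
  proof -
    have "subspace (span {u})" "dim (span {u}) = 1" "u \<in> span {u}" "u \<noteq> 0"
      using that by (auto simp: dim_span span_base)
    then show ?thesis
      using tau_tendsto[OF assms, of "span {u}" u z] tau_zero by simp
  qed
  then show "\<phi> \<in> C0"
    unfolding C0_def
    using Grassmann_continuous[OF assms] Grassmann_tendsto_zero_at_infinity[OF assms] by simp
qed

end
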